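(* Let $N\ge 1$ and $L\ge 1$ be integers and let $m>0$. Let $h_1,\dots,h_N$ be i.i.d. Nakagami-$m$ random variables, i.e. with density $p_h(x)=\frac{2m^m x^{2m-1}}{\Gamma(m)}e^{-mx^2}$ for $x>0$, and set $\gamma_n=h_n^2$ (so each $\gamma_n$ has density $\frac{m^m x^{m-1}}{\Gamma(m)}e^{-mx}$, $x>0$). Define $$R(\mathbf h)^2=\frac{1}{\pi}\,\Gamma\!\left(\frac N2+1\right)^{2/N}\left(\prod_{n=1}^N\gamma_n\right)^{1/N},$$ and for $\rho>0$ define the sphere lower bound $$P_{\rm slb}(\rho)=1-\mathbb E\left[\left(1-\overline{\Gamma}\!\left(\frac N2,\frac{R(\mathbf h)^2}{2}\rho\right)\right)^{L}\right],$$ where the expectation is over $(h_1,\dots,h_N)$ and $\overline\Gamma(a,x)=\frac{1}{\Gamma(a)}\int_x^{\infty}t^{a-1}e^{-t}\,dt$ is the normalized upper incomplete Gamma function. Then the diversity order $$d=-\lim_{\rho\to\infty}\frac{\log P_{\rm slb}(\rho)}{\log\rho}$$ exists and equals $mN$, for every $L\ge 1$.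
   Context: This is the sphere lower bound on the frame error probability of an infinite $N$-dimensional lattice with unit-determinant generator matrix, used over a real block-fading channel $\mathbf y_\ell=\mathrm{diag}(h_1,\dots,h_N)\mathbf x_\ell+\mathbf z_\ell$, $\ell=1,\dots,L$, with i.i.d. $\mathcal N(0,\sigma^2)$ noise and SNR $\rho=1/\sigma^2$; the fading is constant over a frame of $L$ symbols. $\Gamma$ denotes the Gamma function. $P_{\rm slb}(\rho)$ is obtained by replacing the Voronoi region of the faded lattice by a ball of equal volume $\prod_n h_n$, whose squared radius is $R(\mathbf h)^2$. *)

theory Defs
  imports "HOL-Probability.Probability"
begin

definition nakagami_pdf :: "real \<Rightarrow> real \<Rightarrow> real" where
  "nakagami_pdf m x =
     (if x > 0 then 2 * m powr m * x powr (2*m - 1) / Gamma m * exp (- m * x\<^sup>2) else 0)"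

definition nakagami_measure :: "real \<Rightarrow> real measure" where
  "nakagami_measure m = density lborel (\<lambda>x. ennreal (nakagami_pdf m x))"

definition fading_measure :: "real \<Rightarrow> nat \<Rightarrow> (nat \<Rightarrow> real) measure" where
  "fading_measure m N = PiM {..<N} (\<lambda>_. nakagami_measure m)"

definition upper_gamma_reg :: "real \<Rightarrow> real \<Rightarrow> real" where
  "upper_gamma_reg a x = (LBINT t:{x..}. t powr (a - 1) * exp (- t)) / Gamma a"

definition R_sq :: "nat \<Rightarrow> (nat \<Rightarrow> real) \<Rightarrow> real" where
  "R_sq N h = (1 / pi) * Gamma (real N / 2 + 1) powr (2 / real N)
               * (\<Prod>n<N. (h n)\<^sup>2) powr (1 / real N)"

definition P_slb :: "real \<Rightarrow> nat \<Rightarrow> nat \<Rightarrow> real \<Rightarrow> real" where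
  "P_slb m N L \<rho> = 1 - (\<integral>h. (1 - upper_gamma_reg (real N / 2) (R_sq N h / 2 * \<rho>)) ^ L
                           \<partial>fading_measure m N)"

end

theory Submission
  imports Defs
begin

text \<open>Let \<open>Q(h)\<close> be the sphere-bound error probability of one symbol for a fixed fading
  realisation. Since \<open>q \<le> 1 - (1 - q)\<^sup>L \<le> L q\<close>, the frame error probability is squeezed
  between \<open>E[Q]\<close> and \<open>L E[Q]\<close>, so \<open>L\<close> does not affect the diversity.
  Lower bound: a Nakagami-\<open>m\<close> gain satisfies \<open>P(h\<^sup>2 \<le> u) \<ge> c u\<^sup>m\<close> for small \<open>u\<close>, and when all
  \<open>h\<^sub>n\<^sup>2 \<le> u \<sim> 1/\<rho>\<close> the incomplete Gamma function is evaluated at a point \<open>\<le> 1\<close>, giving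
  \<open>E[Q] \<ge> const \<rho>\<^sup>-\<^sup>m\<^sup>N\<close>.
  Upper bound: Markov's inequality of order \<open>N s\<close> for the Gamma tail, \<open>0 < s < m\<close>, bounds
  \<open>Q(h)\<close> by \<open>const \<rho>\<^sup>-\<^sup>N\<^sup>s \<Prod>\<^sub>n h\<^sub>n\<^sup>-\<^sup>2\<^sup>s\<close>, whose expectation is finite because \<open>s < m\<close>.
  Letting \<open>s \<rightarrow> m\<close> yields the exponent \<open>m N\<close>.\<close>

definition gamma_kernel :: "real \<Rightarrow> real \<Rightarrow> real" where
  "gamma_kernel a t = t powr (a - 1) * exp (- t)"

lemma gamma_kernel_nonneg: "0 \<le> gamma_kernel a t"
  by (simp add: gamma_kernel_def)

lemma borel_measurable_gamma_kernel [measurable]: "gamma_kernel a \<in> borel_measurable borel"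
  unfolding gamma_kernel_def by measurable

lemma gamma_kernel_has_integral: "a > 0 \<Longrightarrow> (gamma_kernel a has_integral Gamma a) {0..}"
  using Gamma_integral_real[of a] unfolding gamma_kernel_def[abs_def] by (simp add: exp_minus divide_inverse)

lemma powr_mult_gamma_kernel:
  assumes "0 \<le> t"
  shows "t powr b * gamma_kernel a t = gamma_kernel (a + b) t"
  using assms by (cases "t = 0") (simp_all add: gamma_kernel_def powr_add[symmetric] algebra_simps)

lemma integral_gamma_kernel:
  assumes "a > 0"
  shows "integrable lborel (\<lambda>t. indicator {0..} t * gamma_kernel a t)"
    and "(\<integral>t. indicator {0..} t * gamma_kernel a t \<partial>lborel) = Gamma a"
proof -
  have nn: "(\<integral>\<^sup>+t. ennreal (indicator {0..} t * gamma_kernel a t) \<partial>lborel) = ennreal (Gamma a)"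
    using nn_integral_has_integral_lebesgue[OF _ gamma_kernel_has_integral[OF assms]]
    by (simp add: gamma_kernel_nonneg)
  then show "integrable lborel (\<lambda>t. indicator {0..} t * gamma_kernel a t)"
    by (intro integrableI_nonneg) (auto simp: gamma_kernel_nonneg)
  show "(\<integral>t. indicator {0..} t * gamma_kernel a t \<partial>lborel) = Gamma a"
    using assms by (subst integral_eq_nn_integral) (auto simp: nn gamma_kernel_nonneg Gamma_real_pos less_imp_le)
qed

lemma integrable_gamma_kernel_tail:
  "a > 0 \<Longrightarrow> 0 \<le> x \<Longrightarrow> integrable lborel (\<lambda>t. indicator {x..} t * gamma_kernel a t)"
  by (rule Bochner_Integration.integrable_bound[OF integral_gamma_kernel(1)])
     (auto simp: indicator_def gamma_kernel_nonneg)

lemma upper_gamma_reg_eq: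
  "upper_gamma_reg a x = (\<integral>t. indicator {x..} t * gamma_kernel a t \<partial>lborel) / Gamma a"
  unfolding upper_gamma_reg_def set_lebesgue_integral_def gamma_kernel_def by simp

lemma upper_gamma_reg_nonneg: "a > 0 \<Longrightarrow> 0 \<le> upper_gamma_reg a x"
  unfolding upper_gamma_reg_eq
  by (auto intro!: divide_nonneg_pos integral_nonneg_AE simp: gamma_kernel_nonneg Gamma_real_pos)

lemma upper_gamma_reg_antimono:
  assumes "a > 0" "0 \<le> x" "x \<le> y"
  shows "upper_gamma_reg a y \<le> upper_gamma_reg a x"
proof -
  have "(\<integral>t. indicator {y..} t * gamma_kernel a t \<partial>lborel)
          \<le> (\<integral>t. indicator {x..} t * gamma_kernel a t \<partial>lborel)"
    using assms by (intro integral_mono integrable_gamma_kernel_tail)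
                   (auto simp: indicator_def gamma_kernel_nonneg)
  then show ?thesis
    unfolding upper_gamma_reg_eq using assms by (simp add: divide_right_mono Gamma_real_pos less_imp_le)
qed

lemma upper_gamma_reg_le_1:
  assumes "a > 0" "0 \<le> x"
  shows "upper_gamma_reg a x \<le> 1"
proof -
  have "upper_gamma_reg a x \<le> upper_gamma_reg a 0"
    using upper_gamma_reg_antimono assms by auto
  also have "\<dots> = 1"
    unfolding upper_gamma_reg_eq using integral_gamma_kernel(2)[OF assms(1)] Gamma_real_pos[OF assms(1)]
    by simp
  finally show ?thesis .
qed

lemma upper_gamma_reg_pos:
  assumes "a > 0" "0 \<le> x"
  shows "0 < upper_gamma_reg a x"
proof -
  define y where "y = max 1 x"
  define k where "k = min (y powr (a - 1)) ((y + 1) powr (a - 1)) * exp (- (y + 1))"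
  have y: "1 \<le> y" "x \<le> y" unfolding y_def by auto
  have "k > 0" using y unfolding k_def by simp
  have k_le: "k \<le> gamma_kernel a t" if "t \<in> {y..y+1}" for t
  proof -
    have "min (y powr (a - 1)) ((y + 1) powr (a - 1)) \<le> t powr (a - 1)"
    proof (cases "a \<ge> 1")
      case True
      then have "y powr (a - 1) \<le> t powr (a - 1)" using that y by (intro powr_mono2) auto
      then show ?thesis by simp
    next
      case False
      then have "(y + 1) powr (a - 1) \<le> t powr (a - 1)" using that y by (intro powr_mono2') auto
      then show ?thesis by simp
    qed
    moreover have "exp (- (y + 1)) \<le> exp (- t)" using that by simp
    ultimately show ?thesis unfolding k_def gamma_kernel_def by (intro mult_mono) auto
  qed
  have "integrable lborel (\<lambda>t. indicator {y..y+1} t * k)"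
    by (intro integrable_mult_left) (simp add: integrable_indicator_iff)
  then have "(\<integral>t. indicator {y..y+1} t * k \<partial>lborel)
               \<le> (\<integral>t. indicator {x..} t * gamma_kernel a t \<partial>lborel)"
    using assms y k_le
    by (intro integral_mono integrable_gamma_kernel_tail) (auto simp: indicator_def gamma_kernel_nonneg)
  moreover have "(\<integral>t. indicator {y..y+1} t * k \<partial>lborel) = k" by simp
  ultimately show ?thesis
    unfolding upper_gamma_reg_eq using \<open>k > 0\<close> assms by (simp add: Gamma_real_pos)
qed

text \<open>Markov's inequality for the moment of order \<open>b\<close> of a Gamma(\<open>a\<close>) variable.\<close>
lemma upper_gamma_reg_le_powr:
  assumes "a > 0" "x > 0" "b > 0"
  shows "upper_gamma_reg a x \<le> x powr (- b) * Gamma (a + b) / Gamma a"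
proof -
  have pointwise: "indicator {x..} t * gamma_kernel a t
                     \<le> x powr (- b) * (indicator {0..} t * gamma_kernel (a + b) t)" for t
  proof (cases "x \<le> t")
    case True
    have "1 \<le> x powr (- b) * t powr b"
      using assms True powr_mono2[of b x t] by (simp add: powr_minus field_simps)
    then have "gamma_kernel a t \<le> x powr (- b) * (t powr b * gamma_kernel a t)"
      using mult_right_mono[OF _ gamma_kernel_nonneg] by (metis mult.assoc mult_1)
    then show ?thesis using True assms by (simp add: powr_mult_gamma_kernel)
  qed (simp add: gamma_kernel_nonneg)
  have "(\<integral>t. indicator {x..} t * gamma_kernel a t \<partial>lborel)
          \<le> (\<integral>t. x powr (- b) * (indicator {0..} t * gamma_kernel (a + b) t) \<partial>lborel)"
    using assms pointwise integral_gamma_kernel(1)[of "a + b"]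
    by (intro integral_mono integrable_gamma_kernel_tail integrable_mult_right) auto
  also have "\<dots> = x powr (- b) * Gamma (a + b)"
    using assms integral_gamma_kernel(2)[of "a + b"] by simp
  finally show ?thesis
    unfolding upper_gamma_reg_eq using assms by (simp add: divide_right_mono Gamma_real_pos less_imp_le)
qed

lemma nakagami_pdf_nonneg: "m > 0 \<Longrightarrow> 0 \<le> nakagami_pdf m x"
  unfolding nakagami_pdf_def by (auto intro!: divide_nonneg_pos simp: Gamma_real_pos)

lemma borel_measurable_nakagami_pdf [measurable]: "nakagami_pdf m \<in> borel_measurable borel"
  unfolding nakagami_pdf_def[abs_def] by measurable

lemma sets_nakagami_measure [simp, measurable_cong]: "sets (nakagami_measure m) = sets borel"
  unfolding nakagami_measure_def by simp

lemma nakagami_pdf_eq_gamma_kernel: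
  assumes m: "m > 0" and x: "0 \<le> x"
  shows "nakagami_pdf m x = 2 * m * x * gamma_kernel m (m * x\<^sup>2) / Gamma m"
proof (cases "x = 0")
  case False
  then have x: "x > 0" using x by simp
  have "(m * x\<^sup>2) powr (m - 1) = m powr (m - 1) * (x powr 2) powr (m - 1)"
    using m x by (simp add: powr_mult powr_realpow)
  also have "(x powr 2) powr (m - 1) = x powr (2 * m - 2)"
    by (simp add: powr_powr algebra_simps)
  finally have "2 * m * x * gamma_kernel m (m * x\<^sup>2)
                  = 2 * (m * m powr (m - 1)) * (x * x powr (2 * m - 2)) * exp (- m * x\<^sup>2)"
    unfolding gamma_kernel_def by (simp add: algebra_simps)
  also have "m * m powr (m - 1) = m powr m"
    using m powr_add[of m 1 "m - 1"] by simp
  also have "x * x powr (2 * m - 2) = x powr (2 * m - 1)"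
    using x powr_add[of x 1 "2 * m - 2"] by simp
  finally show ?thesis
    using x m unfolding nakagami_pdf_def by (simp add: Gamma_real_pos)
qed (simp add: nakagami_pdf_def)

text \<open>The square of a Nakagami-\<open>m\<close> variable is Gamma distributed: substitute \<open>t = m x\<^sup>2\<close>.\<close>
lemma nn_integral_nakagami_pdf_square:
  fixes g :: "real \<Rightarrow> real"
  assumes m: "m > 0" and g: "\<And>t. 0 \<le> g t"
    and int: "((\<lambda>t. gamma_kernel m t * g t) has_integral I) {0..}"
  shows "(\<integral>\<^sup>+x. ennreal (nakagami_pdf m x * g (m * x\<^sup>2)) \<partial>lborel) = ennreal (I / Gamma m)"
proof -
  define f where "f t = gamma_kernel m t * g t / Gamma m" for t
  define S :: "real set" where "S = {0..}"
  have f_nonneg: "0 \<le> f t" for t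
    unfolding f_def using g m by (simp add: gamma_kernel_nonneg Gamma_real_pos less_imp_le)
  have "(f has_integral I / Gamma m) S"
    unfolding f_def[abs_def] S_def using int by (rule has_integral_divide)
  then have f_abs: "f absolutely_integrable_on S" and f_int: "integral S f = I / Gamma m"
    using f_nonneg by (auto intro: nonnegative_absolutely_integrable_1 simp: integral_unique)
  have "(\<lambda>x. m * x\<^sup>2) ` S = S"
  proof (intro antisym subsetI)
    fix t assume "t \<in> S"
    then have "t = m * (sqrt (t / m))\<^sup>2" "sqrt (t / m) \<in> S" using m by (auto simp: S_def)
    then show "t \<in> (\<lambda>x. m * x\<^sup>2) ` S" by blast
  qed (use m in \<open>auto simp: S_def\<close>)
  moreover have "inj_on (\<lambda>x. m * x\<^sup>2) S"
    unfolding S_def inj_on_def using m by (auto simp: power2_eq_iff_nonneg)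
  moreover have "((\<lambda>x. m * x\<^sup>2) has_field_derivative 2 * m * x) (at x within S)" for x
    by (auto intro!: derivative_eq_intros)
  ultimately have "((\<lambda>x. \<bar>2 * m * x\<bar> * f (m * x\<^sup>2)) has_integral I / Gamma m) S"
    using has_absolute_integral_change_of_variables_1'[of S "\<lambda>x. m * x\<^sup>2" "\<lambda>x. 2 * m * x" f]
          f_abs f_int
    by (simp add: S_def) (metis integrable_integral set_lebesgue_integral_eq_integral(1))
  then have "(\<integral>\<^sup>+x. ennreal (indicator S x * (\<bar>2 * m * x\<bar> * f (m * x\<^sup>2))) \<partial>lborel)
               = ennreal (I / Gamma m)"
    by (rule nn_integral_has_integral_lebesgue[rotated]) (simp add: f_nonneg)
  moreover have "nakagami_pdf m x * g (m * x\<^sup>2) = indicator S x * (\<bar>2 * m * x\<bar> * f (m * x\<^sup>2))"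
    for x
    using m nakagami_pdf_eq_gamma_kernel[OF m, of x]
    by (cases "0 \<le> x") (auto simp: S_def f_def nakagami_pdf_def)
  ultimately show ?thesis by simp
qed

lemma nn_integral_nakagami_measure:
  "m > 0 \<Longrightarrow> f \<in> borel_measurable borel \<Longrightarrow>
     (\<integral>\<^sup>+x. f x \<partial>nakagami_measure m) = (\<integral>\<^sup>+x. ennreal (nakagami_pdf m x) * f x \<partial>lborel)"
  unfolding nakagami_measure_def by (subst nn_integral_density) (auto simp: nakagami_pdf_nonneg)

lemma prob_space_nakagami_measure:
  assumes m: "m > 0"
  shows "prob_space (nakagami_measure m)"
proof
  have "emeasure (nakagami_measure m) (space (nakagami_measure m))
          = (\<integral>\<^sup>+x. ennreal (nakagami_pdf m x * (\<lambda>_. 1) (m * x\<^sup>2)) \<partial>lborel)"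
    unfolding nakagami_measure_def by (subst emeasure_density) auto
  also have "\<dots> = ennreal (Gamma m / Gamma m)"
    using m gamma_kernel_has_integral[OF m] by (intro nn_integral_nakagami_pdf_square) auto
  finally show "emeasure (nakagami_measure m) (space (nakagami_measure m)) = 1"
    using Gamma_real_pos[OF m] by simp
qed

lemma nn_integral_nakagami_negative_moment:
  assumes m: "m > 0" and s: "s < m"
  shows "(\<integral>\<^sup>+x. ennreal ((x\<^sup>2) powr (- s)) \<partial>nakagami_measure m)
           = ennreal (m powr s * Gamma (m - s) / Gamma m)"
proof -
  define g where "g t = (t / m) powr (- s)" for t
  have "((\<lambda>t. m powr s * gamma_kernel (m - s) t) has_integral m powr s * Gamma (m - s)) {0..}"
    using s by (intro has_integral_mult_right gamma_kernel_has_integral) simp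
  moreover have "m powr s * gamma_kernel (m - s) t = gamma_kernel m t * g t" if "t \<in> {0..}" for t
    using that m powr_mult_gamma_kernel[of t "- s" m]
    by (cases "t = 0") (auto simp: g_def gamma_kernel_def powr_divide powr_minus divide_simps mult_ac)
  ultimately have "((\<lambda>t. gamma_kernel m t * g t) has_integral m powr s * Gamma (m - s)) {0..}"
    using has_integral_cong by (metis (no_types, lifting))
  then have "(\<integral>\<^sup>+x. ennreal (nakagami_pdf m x * g (m * x\<^sup>2)) \<partial>lborel)
               = ennreal (m powr s * Gamma (m - s) / Gamma m)"
    using m by (intro nn_integral_nakagami_pdf_square) (auto simp: g_def)
  moreover have "g (m * x\<^sup>2) = (x\<^sup>2) powr (- s)" for x
    using m by (simp add: g_def)
  ultimately show ?thesis
    using m by (simp add: nn_integral_nakagami_measure ennreal_mult'' nakagami_pdf_nonneg)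
qed

lemma integral_nakagami_negative_moment:
  assumes "m > 0" "s < m"
  shows "integrable (nakagami_measure m) (\<lambda>x. (x\<^sup>2) powr (- s))"
    and "(\<integral>x. (x\<^sup>2) powr (- s) \<partial>nakagami_measure m) = m powr s * Gamma (m - s) / Gamma m"
  using nn_integral_nakagami_negative_moment[OF assms] assms
  by (auto intro!: integrableI_nonneg simp: integral_eq_nn_integral Gamma_real_pos)

lemma nakagami_pdf_ge_powr:
  assumes m: "m > 0" and x: "0 < x" "x\<^sup>2 \<le> 1"
  shows "2 * m powr m * x powr (2 * m - 1) / Gamma m * exp (- m) \<le> nakagami_pdf m x"
proof -
  have "exp (- m) \<le> exp (- m * x\<^sup>2)"
    using mult_left_mono[OF x(2), of m] m by simp
  moreover have "0 \<le> 2 * m powr m * x powr (2 * m - 1) / Gamma m"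
    using m by (simp add: Gamma_real_pos less_imp_le)
  ultimately have "2 * m powr m * x powr (2 * m - 1) / Gamma m * exp (- m)
                     \<le> 2 * m powr m * x powr (2 * m - 1) / Gamma m * exp (- m * x\<^sup>2)"
    by (rule mult_left_mono)
  then show ?thesis
    using x unfolding nakagami_pdf_def by simp
qed

lemma measure_nakagami_square_le_ge:
  assumes m: "m > 0" and u: "0 < u" "u \<le> 1"
  shows "m powr m * exp (- m) / (m * Gamma m) * u powr m \<le> measure (nakagami_measure m) {x. x\<^sup>2 \<le> u}"
proof -
  define C where "C = 2 * m powr m * exp (- m) / Gamma m"
  have C_mult: "C * y = 2 * m powr m * y / Gamma m * exp (- m)" for y
    unfolding C_def by simp
  have C: "C \<ge> 0" unfolding C_def using m by (simp add: Gamma_real_pos less_imp_le)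
  have pdf_ge: "ennreal (C * (indicator {0..sqrt u} x * x powr (2 * m - 1)))
                  \<le> ennreal (nakagami_pdf m x) * indicator {x. x\<^sup>2 \<le> u} x" for x
  proof (cases "0 < x \<and> x \<le> sqrt u")
    case True
    then have "x\<^sup>2 \<le> u"
      using u by (metis less_imp_le power_mono real_sqrt_pow2)
    then show ?thesis
      using True u nakagami_pdf_ge_powr[OF m, of x] by (simp add: C_mult ennreal_leI)
  qed (auto simp: indicator_def)
  have "(\<integral>\<^sup>+x. ennreal (indicator {0..sqrt u} x * x powr (2 * m - 1)) \<partial>lborel)
          = ennreal (sqrt u powr (2 * m - 1 + 1) / (2 * m - 1 + 1))"
    by (rule nn_integral_has_integral_lebesgue[OF _ has_integral_powr_from_0]) (use m u in auto)
  also have "sqrt u powr (2 * m - 1 + 1) = u powr m"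
    using u by (simp add: powr_half_sqrt[symmetric] powr_powr)
  finally have "ennreal (C * (u powr m / (2 * m)))
                  = (\<integral>\<^sup>+x. ennreal (C * (indicator {0..sqrt u} x * x powr (2 * m - 1))) \<partial>lborel)"
    using C m u by (simp add: ennreal_mult'' nn_integral_cmult) (simp add: ennreal_mult[symmetric])
  also have "\<dots> \<le> (\<integral>\<^sup>+x. ennreal (nakagami_pdf m x) * indicator {x. x\<^sup>2 \<le> u} x \<partial>lborel)"
    using pdf_ge by (rule nn_integral_mono)
  also have "\<dots> = emeasure (nakagami_measure m) {x. x\<^sup>2 \<le> u}"
    unfolding nakagami_measure_def by (subst emeasure_density) auto
  also have "\<dots> = ennreal (measure (nakagami_measure m) {x. x\<^sup>2 \<le> u})"
    using prob_space.finite_measure[OF prob_space_nakagami_measure[OF m]]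
    by (rule finite_measure.emeasure_eq_measure)
  finally have "C * (u powr m / (2 * m)) \<le> measure (nakagami_measure m) {x. x\<^sup>2 \<le> u}"
    by (rule ennreal_le_iff[OF measure_nonneg, THEN iffD1])
  moreover have "C * (u powr m / (2 * m)) = m powr m * exp (- m) / (m * Gamma m) * u powr m"
    unfolding C_def by (simp add: mult_ac)
  ultimately show ?thesis by simp
qed

lemma prob_space_fading_measure: "m > 0 \<Longrightarrow> prob_space (fading_measure m N)"
  unfolding fading_measure_def by (intro prob_space_PiM prob_space_nakagami_measure)

lemma fading_measure_integral_prod:
  fixes f :: "real \<Rightarrow> real"
  assumes m: "m > 0" and f: "integrable (nakagami_measure m) f"
  shows "integrable (fading_measure m N) (\<lambda>h. \<Prod>n<N. f (h n))"
    and "(\<integral>h. (\<Prod>n<N. f (h n)) \<partial>fading_measure m N) = (\<integral>x. f x \<partial>nakagami_measure m) ^ N"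
proof -
  interpret product_prob_space "\<lambda>_. nakagami_measure m"
    using prob_space_nakagami_measure[OF m] by (rule product_prob_spaceI)
  show "integrable (fading_measure m N) (\<lambda>h. \<Prod>n<N. f (h n))"
    unfolding fading_measure_def using product_integrable_prod[of "{..<N}" "\<lambda>_. f"] f by simp
  show "(\<integral>h. (\<Prod>n<N. f (h n)) \<partial>fading_measure m N) = (\<integral>x. f x \<partial>nakagami_measure m) ^ N"
    unfolding fading_measure_def using product_integral_prod[of "{..<N}" "\<lambda>_. f"] f by simp
qed

lemma AE_fading_measure_nonzero:
  assumes m: "m > 0"
  shows "AE h in fading_measure m N. \<forall>n<N. h n \<noteq> 0"
proof -
  have "AE x in nakagami_measure m. x \<noteq> 0"
    unfolding nakagami_measure_def
    by (subst AE_density) (auto intro: eventually_mono[OF AE_lborel_singleton[of 0]])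
  then have "AE h in fading_measure m N. h n \<noteq> 0" if "n < N" for n
    unfolding fading_measure_def using that prob_space_nakagami_measure[OF m]
    by (intro AE_PiM_component) auto
  then show ?thesis
    by (subst AE_all_countable) (auto simp: eventually_mono)
qed

definition radius_const :: "nat \<Rightarrow> real" where
  "radius_const N = Gamma (real N / 2 + 1) powr (2 / real N) / (2 * pi)"

lemma radius_const_pos: "0 < radius_const N"
proof -
  have "0 < Gamma (real N / 2 + 1)" by (rule Gamma_real_pos) simp
  then have "Gamma (real N / 2 + 1) \<noteq> 0" by linarith
  then show ?thesis unfolding radius_const_def by simp
qed

lemma R_sq_half_mult:
  "R_sq N h / 2 * \<rho> = radius_const N * \<rho> * (\<Prod>n<N. (h n)\<^sup>2) powr (1 / real N)"
  by (simp add: R_sq_def radius_const_def mult_ac)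

lemma borel_measurable_upper_gamma_reg_R_sq:
  assumes "a > 0" "0 \<le> \<rho>"
  shows "(\<lambda>h. upper_gamma_reg a (R_sq N h / 2 * \<rho>)) \<in> borel_measurable (fading_measure m N)"
proof -
  have "mono (\<lambda>y. - upper_gamma_reg a (max 0 y))"
    using upper_gamma_reg_antimono[OF assms(1)] by (simp add: mono_def max_def)
  then have "(\<lambda>y. - upper_gamma_reg a (max 0 y)) \<in> borel_measurable borel"
    by (rule borel_measurable_mono)
  then have [measurable]: "(\<lambda>y. upper_gamma_reg a (max 0 y)) \<in> borel_measurable borel"
    by simp
  have "(\<lambda>h. R_sq N h / 2 * \<rho>) \<in> borel_measurable (fading_measure m N)"
    unfolding R_sq_half_mult fading_measure_def by measurable
  then have "(\<lambda>h. upper_gamma_reg a (max 0 (R_sq N h / 2 * \<rho>))) \<in> borel_measurable (fading_measure m N)"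
    by measurable
  moreover have max_eq: "max 0 (R_sq N h / 2 * \<rho>) = R_sq N h / 2 * \<rho>" for h
    using assms by (simp add: R_sq_def)
  ultimately show ?thesis by (simp only: max_eq)
qed

lemma one_minus_power_one_minus_bounds:
  fixes q :: real
  assumes "0 \<le> q" "q \<le> 1" "1 \<le> L"
  shows "q \<le> 1 - (1 - q) ^ L" and "1 - (1 - q) ^ L \<le> real L * q"
proof -
  have "(1 - q) ^ L \<le> (1 - q) ^ 1"
    using assms by (intro power_decreasing) auto
  then show "q \<le> 1 - (1 - q) ^ L" by simp
  have "1 + real L * (- q) \<le> (1 + - q) ^ L"
    using assms by (intro Bernoulli_inequality) simp
  then show "1 - (1 - q) ^ L \<le> real L * q" by simp
qed

definition sphere_error_prob :: "nat \<Rightarrow> real \<Rightarrow> (nat \<Rightarrow> real) \<Rightarrow> real" where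
  "sphere_error_prob N \<rho> h = upper_gamma_reg (real N / 2) (R_sq N h / 2 * \<rho>)"

lemma sphere_error_prob_bounds:
  assumes "N \<ge> 1" "0 \<le> \<rho>"
  shows "0 \<le> sphere_error_prob N \<rho> h" and "sphere_error_prob N \<rho> h \<le> 1"
  using assms upper_gamma_reg_nonneg upper_gamma_reg_le_1
  by (auto simp: sphere_error_prob_def R_sq_def)

lemma integrable_sphere_error_prob:
  assumes m: "m > 0" and N: "N \<ge> 1" and \<rho>: "0 \<le> \<rho>"
  shows "integrable (fading_measure m N) (sphere_error_prob N \<rho>)"
proof -
  interpret prob_space "fading_measure m N" by (rule prob_space_fading_measure[OF m])
  have [measurable]: "sphere_error_prob N \<rho> \<in> borel_measurable (fading_measure m N)"
    unfolding sphere_error_prob_def[abs_def] using N \<rho>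
    by (intro borel_measurable_upper_gamma_reg_R_sq) auto
  show ?thesis
    using sphere_error_prob_bounds[OF N \<rho>] by (intro integrable_const_bound[where B = 1]) auto
qed

text \<open>The frame error probability lies between the error probability of one symbol and its
  union bound over the \<open>L\<close> symbols of the frame.\<close>
lemma P_slb_bounds:
  assumes m: "m > 0" and N: "N \<ge> 1" and L: "L \<ge> 1" and \<rho>: "0 \<le> \<rho>"
  shows "(\<integral>h. sphere_error_prob N \<rho> h \<partial>fading_measure m N) \<le> P_slb m N L \<rho>"
    and "P_slb m N L \<rho> \<le> real L * (\<integral>h. sphere_error_prob N \<rho> h \<partial>fading_measure m N)"
proof -
  interpret prob_space "fading_measure m N" by (rule prob_space_fading_measure[OF m])
  let ?Q = "sphere_error_prob N \<rho>"
  note Q = sphere_error_prob_bounds[OF N \<rho>]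
  have int_Q: "integrable (fading_measure m N) ?Q"
    by (rule integrable_sphere_error_prob[OF m N \<rho>])
  have int_pow: "integrable (fading_measure m N) (\<lambda>h. (1 - ?Q h) ^ L)"
    using Q borel_measurable_integrable[OF int_Q]
    by (intro integrable_const_bound[where B = 1]) (auto intro!: power_le_one)
  have P_eq: "P_slb m N L \<rho> = (\<integral>h. 1 - (1 - ?Q h) ^ L \<partial>fading_measure m N)"
    unfolding P_slb_def sphere_error_prob_def[symmetric] using int_pow by (simp add: prob_space)
  show "(\<integral>h. ?Q h \<partial>fading_measure m N) \<le> P_slb m N L \<rho>"
    unfolding P_eq using int_Q int_pow one_minus_power_one_minus_bounds(1)[OF Q L]
    by (intro integral_mono) auto
  show "P_slb m N L \<rho> \<le> real L * (\<integral>h. ?Q h \<partial>fading_measure m N)"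
    unfolding P_eq using int_Q int_pow one_minus_power_one_minus_bounds(2)[OF Q L]
    by (subst integral_mult_right_zero[symmetric], intro integral_mono) auto
qed

text \<open>If every \<open>h\<^sub>n\<^sup>2 \<le> u\<close>, the argument of the incomplete Gamma function is at most \<open>1\<close>.\<close>
lemma integral_sphere_error_prob_ge:
  assumes m: "m > 0" and N: "N \<ge> 1" and \<rho>: "1 \<le> radius_const N * \<rho>"
  defines "u \<equiv> 1 / (radius_const N * \<rho>)"
  shows "upper_gamma_reg (real N / 2) 1 * measure (nakagami_measure m) {x. x\<^sup>2 \<le> u} ^ N
           \<le> (\<integral>h. sphere_error_prob N \<rho> h \<partial>fading_measure m N)"
proof -
  interpret prob_space "nakagami_measure m" by (rule prob_space_nakagami_measure[OF m])
  let ?I = "\<lambda>h. \<Prod>n<N. indicator {x. x\<^sup>2 \<le> u} (h n) :: real"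
  have a: "real N / 2 > 0" using N by simp
  have \<rho>_pos: "0 < \<rho>"
    using \<rho> radius_const_pos[of N] by (metis less_le_trans zero_less_mult_pos zero_less_one)
  have u: "0 < u" using \<rho> unfolding u_def by simp
  have int_ind: "integrable (nakagami_measure m) (indicator {x. x\<^sup>2 \<le> u} :: real \<Rightarrow> real)"
    by (intro integrable_const_bound[where B = 1]) auto
  have "upper_gamma_reg (real N / 2) 1 * ?I h \<le> sphere_error_prob N \<rho> h" for h
  proof (cases "\<forall>n<N. (h n)\<^sup>2 \<le> u")
    case True
    then have "(\<Prod>n<N. (h n)\<^sup>2) \<le> (\<Prod>n<N. u)"
      by (intro prod_mono) auto
    then have "(\<Prod>n<N. (h n)\<^sup>2) powr (1 / real N) \<le> (u ^ N) powr (1 / real N)"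
      by (intro powr_mono2) (auto intro: prod_nonneg)
    also have "(u ^ N) powr (1 / real N) = u"
      using u N by (simp add: powr_realpow[symmetric] powr_powr)
    finally have X_le: "R_sq N h / 2 * \<rho> \<le> 1"
      using \<rho>_pos radius_const_pos[of N] unfolding R_sq_half_mult u_def
      by (simp add: mult_left_mono divide_simps mult_ac)
    have X_nonneg: "0 \<le> R_sq N h / 2 * \<rho>" using \<rho>_pos by (simp add: R_sq_def)
    have "?I h = 1" using True by simp
    then show ?thesis
      using upper_gamma_reg_antimono[OF a X_nonneg X_le] by (simp add: sphere_error_prob_def)
  next
    case False
    then obtain n where "n < N" "\<not> (h n)\<^sup>2 \<le> u" by auto
    then have I0: "?I h = 0" by (intro prod_zero bexI[of _ n]) auto
    show ?thesis
      unfolding I0 using sphere_error_prob_bounds[OF N, of \<rho> h] \<rho>_pos by simp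
  qed
  then have "(\<integral>h. upper_gamma_reg (real N / 2) 1 * ?I h \<partial>fading_measure m N)
               \<le> (\<integral>h. sphere_error_prob N \<rho> h \<partial>fading_measure m N)"
    using fading_measure_integral_prod(1)[OF m int_ind] integrable_sphere_error_prob[OF m N] \<rho>_pos
    by (intro integral_mono) auto
  then show ?thesis
    using fading_measure_integral_prod(2)[OF m int_ind] by (simp add: measure_def)
qed

text \<open>Markov's inequality of order \<open>N s\<close> turns the error probability into the product of the
  negative moments \<open>h\<^sub>n\<^sup>-\<^sup>2\<^sup>s\<close>, whose expectation factorises.\<close>
lemma integral_sphere_error_prob_le:
  assumes m: "m > 0" and N: "N \<ge> 1" and \<rho>: "0 < \<rho>" and s: "0 < s" "s < m"
  shows "(\<integral>h. sphere_error_prob N \<rho> h \<partial>fading_measure m N)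
           \<le> Gamma (real N / 2 + real N * s) / Gamma (real N / 2)
               * (radius_const N * \<rho>) powr (- (real N * s)) * (m powr s * Gamma (m - s) / Gamma m) ^ N"
proof -
  define K where "K = Gamma (real N / 2 + real N * s) / Gamma (real N / 2)
                        * (radius_const N * \<rho>) powr (- (real N * s))"
  define g where "g x = (x\<^sup>2) powr (- s)" for x :: real
  note g = integral_nakagami_negative_moment[OF m s(2), folded g_def]
  have "AE h in fading_measure m N. sphere_error_prob N \<rho> h \<le> K * (\<Prod>n<N. g (h n))"
    using AE_fading_measure_nonzero[OF m]
  proof (rule eventually_mono)
    fix h :: "nat \<Rightarrow> real"
    assume h: "\<forall>n<N. h n \<noteq> 0"
    then have P: "0 < (\<Prod>n<N. (h n)\<^sup>2)" by (auto intro: prod_pos)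
    have "sphere_error_prob N \<rho> h
            \<le> (radius_const N * \<rho> * (\<Prod>n<N. (h n)\<^sup>2) powr (1 / real N)) powr (- (real N * s))
               * Gamma (real N / 2 + real N * s) / Gamma (real N / 2)"
      unfolding sphere_error_prob_def R_sq_half_mult
      using N \<rho> s h radius_const_pos[of N] by (intro upper_gamma_reg_le_powr mult_pos_pos) auto
    also have "\<dots> = K * (\<Prod>n<N. (h n)\<^sup>2) powr (- s)"
      unfolding K_def using N \<rho> P radius_const_pos[of N] by (simp add: powr_mult powr_powr)
    also have "(\<Prod>n<N. (h n)\<^sup>2) powr (- s) = (\<Prod>n<N. g (h n))"
      unfolding g_def by (rule prod_powr_distrib)
    finally show "sphere_error_prob N \<rho> h \<le> K * (\<Prod>n<N. g (h n))" .
  qed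
  then have "(\<integral>h. sphere_error_prob N \<rho> h \<partial>fading_measure m N)
               \<le> (\<integral>h. K * (\<Prod>n<N. g (h n)) \<partial>fading_measure m N)"
    using integrable_sphere_error_prob[OF m N] fading_measure_integral_prod(1)[OF m g(1)] \<rho>
    by (intro integral_mono_AE) auto
  also have "\<dots> = K * (m powr s * Gamma (m - s) / Gamma m) ^ N"
    using fading_measure_integral_prod(2)[OF m g(1)] g(2) by simp
  finally show ?thesis unfolding K_def .
qed

lemma P_slb_ge_powr:
  assumes m: "m > 0" and N: "N \<ge> 1" and L: "L \<ge> 1"
  shows "\<exists>A>0. eventually (\<lambda>\<rho>. A * \<rho> powr (- (m * real N)) \<le> P_slb m N L \<rho>) at_top"
proof -
  define c where "c = radius_const N"
  define D where "D = m powr m * exp (- m) / (m * Gamma m)"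
  define A where "A = upper_gamma_reg (real N / 2) 1 * D ^ N * c powr (- (m * real N))"
  have c: "0 < c" unfolding c_def by (rule radius_const_pos)
  have "0 < A" unfolding A_def D_def using m N c by (simp add: upper_gamma_reg_pos Gamma_real_pos)
  moreover have "A * \<rho> powr (- (m * real N)) \<le> P_slb m N L \<rho>" if \<rho>: "1 / c \<le> \<rho>" for \<rho>
  proof -
    define u where "u = 1 / (c * \<rho>)"
    have c\<rho>: "1 \<le> c * \<rho>" using \<rho> c by (simp add: field_simps)
    then have u: "0 < u" "u \<le> 1" unfolding u_def by auto
    have "0 < \<rho>" using c\<rho> c by (metis less_le_trans zero_less_mult_pos zero_less_one)
    have "A * \<rho> powr (- (m * real N)) = upper_gamma_reg (real N / 2) 1 * (D * u powr m) ^ N"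
      unfolding A_def u_def using c \<open>0 < \<rho>\<close>
      by (simp add: power_mult_distrib power_divide powr_power powr_divide powr_mult
                    powr_minus_divide mult_ac)
    also have "\<dots> \<le> upper_gamma_reg (real N / 2) 1 * measure (nakagami_measure m) {x. x\<^sup>2 \<le> u} ^ N"
      using measure_nakagami_square_le_ge[OF m u] m N
      by (intro mult_left_mono power_mono upper_gamma_reg_nonneg) (auto simp: D_def Gamma_real_pos)
    also have "\<dots> \<le> (\<integral>h. sphere_error_prob N \<rho> h \<partial>fading_measure m N)"
      using integral_sphere_error_prob_ge[OF m N] c\<rho> unfolding u_def c_def by simp
    also have "\<dots> \<le> P_slb m N L \<rho>"
      using P_slb_bounds(1)[OF m N L] \<open>0 < \<rho>\<close> by simp
    finally show ?thesis .
  qed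
  ultimately show ?thesis by (auto intro: eventually_at_top_linorderI)
qed

lemma P_slb_le_powr:
  assumes m: "m > 0" and N: "N \<ge> 1" and L: "L \<ge> 1" and s: "0 < s" "s < m * real N"
  shows "\<exists>B. eventually (\<lambda>\<rho>. P_slb m N L \<rho> \<le> B * \<rho> powr (- s)) at_top"
proof -
  define c where "c = radius_const N"
  define t where "t = s / real N"
  define B where "B = real L * (Gamma (real N / 2 + s) / Gamma (real N / 2) * c powr (- s)
                     * (m powr t * Gamma (m - t) / Gamma m) ^ N)"
  have c: "0 < c" unfolding c_def by (rule radius_const_pos)
  have t: "0 < t" "t < m" "real N * t = s"
    unfolding t_def using s N by (auto simp: field_simps)
  have "P_slb m N L \<rho> \<le> B * \<rho> powr (- s)" if "0 < \<rho>" for \<rho>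
  proof -
    have "P_slb m N L \<rho> \<le> real L * (\<integral>h. sphere_error_prob N \<rho> h \<partial>fading_measure m N)"
      using P_slb_bounds(2)[OF m N L] that by simp
    also have "\<dots> \<le> real L * (Gamma (real N / 2 + s) / Gamma (real N / 2) * (c * \<rho>) powr (- s)
                     * (m powr t * Gamma (m - t) / Gamma m) ^ N)"
      using integral_sphere_error_prob_le[OF m N that t(1,2)] unfolding t(3) c_def
      by (intro mult_left_mono) simp_all
    also have "\<dots> = B * \<rho> powr (- s)"
      unfolding B_def using c that by (simp add: powr_mult mult_ac)
    finally show ?thesis .
  qed
  then show ?thesis by (auto intro!: exI[of _ B] eventually_at_top_linorderI[of 1])
qed

lemma neg_ln_div_ln_bounds:
  fixes \<rho> A B P k s :: real
  assumes "1 < \<rho>" "0 < A" and lower: "A * \<rho> powr (- k) \<le> P" and upper: "P \<le> B * \<rho> powr (- s)"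
  shows "s - ln B / ln \<rho> \<le> - (ln P / ln \<rho>)" and "- (ln P / ln \<rho>) \<le> k - ln A / ln \<rho>"
proof -
  have "0 < ln \<rho>" using \<open>1 < \<rho>\<close> by simp
  have "0 < A * \<rho> powr (- k)" using assms(1,2) by simp
  with lower have "0 < P" by linarith
  with upper have "0 < B * \<rho> powr (- s)" by linarith
  then have "0 < B" using \<open>1 < \<rho>\<close> by (simp add: zero_less_mult_iff)
  have "ln P \<le> ln B - s * ln \<rho>"
    using upper \<open>0 < B\<close> \<open>0 < P\<close> \<open>1 < \<rho>\<close>
    by (subst (asm) ln_le_cancel_iff[symmetric]) (auto simp: ln_mult ln_powr)
  then have "ln P / ln \<rho> \<le> (ln B - s * ln \<rho>) / ln \<rho>"
    using \<open>0 < ln \<rho>\<close> by (intro divide_right_mono) auto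
  then show "s - ln B / ln \<rho> \<le> - (ln P / ln \<rho>)"
    using \<open>0 < ln \<rho>\<close> by (simp add: diff_divide_distrib)
  have "ln A - k * ln \<rho> \<le> ln P"
    using lower \<open>0 < A\<close> \<open>0 < P\<close> \<open>1 < \<rho>\<close>
    by (subst (asm) ln_le_cancel_iff[symmetric]) (auto simp: ln_mult ln_powr)
  then show "- (ln P / ln \<rho>) \<le> k - ln A / ln \<rho>"
    using \<open>0 < ln \<rho>\<close> by (simp add: field_simps)
qed

lemma eventually_abs_div_ln_less:
  fixes C d :: real
  assumes "0 < d"
  shows "eventually (\<lambda>\<rho>. \<bar>C / ln \<rho>\<bar> < d) at_top"
proof -
  have "((\<lambda>\<rho>. C / ln \<rho>) \<longlongrightarrow> 0) at_top"
    by (intro tendsto_divide_0[OF tendsto_const] filterlim_at_top_imp_at_infinity ln_at_top)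
  from tendstoD[OF this assms] show ?thesis by simp
qed

lemma tendsto_neg_ln_div_ln_at_top:
  fixes P :: "real \<Rightarrow> real" and k :: real
  assumes "0 < k"
    and lower: "\<exists>A>0. eventually (\<lambda>\<rho>. A * \<rho> powr (- k) \<le> P \<rho>) at_top"
    and upper: "\<And>s. 0 < s \<Longrightarrow> s < k \<Longrightarrow> \<exists>B. eventually (\<lambda>\<rho>. P \<rho> \<le> B * \<rho> powr (- s)) at_top"
  shows "((\<lambda>\<rho>. - (ln (P \<rho>) / ln \<rho>)) \<longlongrightarrow> k) at_top"
proof (rule tendstoI)
  fix e :: real
  assume "0 < e"
  define s where "s = max (k / 2) (k - e / 2)"
  have s: "0 < s" "s < k" "k - e / 2 \<le> s" unfolding s_def using \<open>0 < k\<close> \<open>0 < e\<close> by auto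
  obtain A where "0 < A" and A: "eventually (\<lambda>\<rho>. A * \<rho> powr (- k) \<le> P \<rho>) at_top"
    using lower by blast
  obtain B where B: "eventually (\<lambda>\<rho>. P \<rho> \<le> B * \<rho> powr (- s)) at_top"
    using upper[OF s(1,2)] by blast
  have "eventually (\<lambda>\<rho>. 1 < \<rho> \<and> A * \<rho> powr (- k) \<le> P \<rho> \<and> P \<rho> \<le> B * \<rho> powr (- s)
                         \<and> \<bar>ln A / ln \<rho>\<bar> < e \<and> \<bar>ln B / ln \<rho>\<bar> < e / 2) at_top"
    by (intro eventually_conj eventually_gt_at_top A B eventually_abs_div_ln_less)
       (use \<open>0 < e\<close> in auto)
  then show "eventually (\<lambda>\<rho>. dist (- (ln (P \<rho>) / ln \<rho>)) k < e) at_top"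
  proof (rule eventually_mono, elim conjE)
    fix \<rho> :: real
    assume "1 < \<rho>" "A * \<rho> powr (- k) \<le> P \<rho>" "P \<rho> \<le> B * \<rho> powr (- s)"
      and "\<bar>ln A / ln \<rho>\<bar> < e" "\<bar>ln B / ln \<rho>\<bar> < e / 2"
    with neg_ln_div_ln_bounds[OF \<open>1 < \<rho>\<close> \<open>0 < A\<close>] s(3)
    show "dist (- (ln (P \<rho>) / ln \<rho>)) k < e"
      unfolding dist_real_def abs_less_iff by fastforce
  qed
qed

theorem theorem1:
  fixes m :: real and N L :: nat
  assumes "N \<ge> 1" and "L \<ge> 1" and "m > 0"
  shows "((\<lambda>\<rho>. - (ln (P_slb m N L \<rho>) / ln \<rho>)) \<longlongrightarrow> m * real N) at_top"
  using assms P_slb_ge_powr P_slb_le_powr by (intro tendsto_neg_ln_div_ln_at_top) auto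

end
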